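(* Let $C$ be an $(n,k)$-code with generator matrix $G$ and let $A_1,\dots,A_\ell\subseteq[n]$. For all $B\subseteq\bar A_1\cup\dots\cup\bar A_\ell$, $\operatorname{rank}\mathcal H_{A_1,\dots,A_\ell}[G]\ge|B|+\operatorname{rank}\mathcal H_{A_1\setminus B,\dots,A_\ell\setminus B}[G|_{\bar B}]$, where in the second term the column index set is $[n]\setminus B$ (so complements are taken in $[n]\setminus B$).
   Context: For a $k\times N$ matrix $G$ with columns indexed by a set $U$, $A\subseteq U$, $G|_A$ is the submatrix of columns in $A$ and $\bar A=U\setminus A$. $\mathcal H_{A_1,\dots,A_\ell}[G]$ is the $(|U|+\ell k)\times\sum_i|\bar A_i|$ block matrix whose first block row is $(I_U|_{\bar A_1},\dots,I_U|_{\bar A_\ell})$ ($I_U$ the identity matrix indexed by $U$) and below which is the block-diagonal matrix $\operatorname{diag}(G|_{\bar A_1},\dots,G|_{\bar A_\ell})$. *)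

theory Defs
  imports "Jordan_Normal_Form.DL_Rank"
begin

abbreviation mrank :: "'a::field mat \<Rightarrow> nat" where
  "mrank M \<equiv> vec_space.rank (dim_row M) M"

text \<open>The column labels of the block matrix H: block i (i < length As) consists of the
  columns of I_U and G restricted to the complement U - As!i (taken inside the column
  index set U), in increasing order of labels.\<close>
definition H_cols :: "nat set \<Rightarrow> nat set list \<Rightarrow> (nat \<times> nat) list" where
  "H_cols U As = concat (map (\<lambda>i. map (\<lambda>u. (i, u)) (sorted_list_of_set (U - As ! i)))
                              [0..<length As])"

text \<open>H_{A_1,...,A_l}[G|_U]: G is a k x n matrix whose columns are labelled 0..n-1;
  U (a subset of {0..<n}) is the column index set of the matrix under consideration,
  i.e. the matrix is G|_U with columns indexed by U.  Rows: first |U| rows are the rows of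
  the identity I_U (labelled by the elements of U in increasing order), then l blocks
  of k rows, block b carrying G|_{U - A_b} in the columns of block b and 0 elsewhere.\<close>
definition Hmat :: "'a::field mat \<Rightarrow> nat set \<Rightarrow> nat set list \<Rightarrow> 'a mat" where
  "Hmat G U As =
     (let k = dim_row G; cs = H_cols U As; us = sorted_list_of_set U in
      mat (card U + length As * k) (length cs)
        (\<lambda>(r, c). let (i, u) = cs ! c in
           if r < card U then (if us ! r = u then 1 else 0)
           else (let r' = r - card U in
                 if r' div k = i then G $$ (r' mod k, u) else 0)))"

end

theory Submission
  imports Defs
begin

(* Write H = H_{A_1..A_l}[G] and H' = H_{A_1-B..A_l-B}[G|_{[n]-B}]. Every column (i, u) of H'
   (so u is not in B) is the restriction of the column (i, u) of H to the rows of H that carry the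
   same entries, and the latter column vanishes on the identity rows labelled by B. Moreover, each
   b in B lies outside some A_i, and the column (i, b) of H is the unit vector e_b on the identity
   rows labelled by B. Lifting a basis of the column space of H' and adjoining these |B| columns
   therefore gives linearly independent columns of H. *)

lemma (in vec_space) lin_indpt_subset_cols_card_rank:
  assumes "A \<in> carrier_mat n nc"
  obtains S where "S \<subseteq> set (cols A)" "lin_indpt S" "card S = rank A"
proof -
  let ?P = "\<lambda>T. T \<subseteq> set (cols A) \<and> lin_indpt T"
  have "?P {}" by (simp add: lin_dep_def)
  then obtain S where S: "maximal S ?P"
    using maximal_exists_superset[of "set (cols A)" ?P "{}"] by blast
  then have "S \<subseteq> set (cols A)" "lin_indpt S"
    by (simp_all add: maximal_def)
  then show thesis
    using rank_card_indpt[OF assms S] by (intro that) simp_all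
qed

lemma (in vec_space) span_coordinate_eq_0:
  assumes "W \<subseteq> carrier_vec n" "i < n" "\<And>w. w \<in> W \<Longrightarrow> w $ i = 0" "v \<in> span W"
  shows "v $ i = 0"
proof -
  obtain a X where "v = lincomb a X" "finite X" "X \<subseteq> W"
    using in_spanE[OF assms(4)] by blast
  moreover have "(\<Sum>x\<in>X. a x * x $ i) = 0"
    using \<open>X \<subseteq> W\<close> assms(3) by (intro sum.neutral) auto
  ultimately show ?thesis
    using assms(1,2) lincomb_index[of i X a] by auto
qed

lemma (in vec_space) lin_indpt_insert_nonzero_coordinate:
  assumes W: "W \<subseteq> carrier_vec n" "lin_indpt W" and v: "v \<in> carrier_vec n"
    and i: "i < n" "v $ i \<noteq> 0" "\<And>w. w \<in> W \<Longrightarrow> w $ i = 0"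
  shows "lin_indpt (insert v W)" "v \<notin> W"
proof -
  show "v \<notin> W" using i by auto
  moreover have "v \<notin> span W"
    using span_coordinate_eq_0[OF W(1) i(1) i(3)] i(2) by blast
  ultimately show "lin_indpt (insert v W)"
    using lin_dep_iff_in_span[OF W v] by simp
qed

lemma (in vec_space) lin_indpt_Un_pivot_vectors:
  assumes W: "W \<subseteq> carrier_vec n" "finite W" "lin_indpt W"
    and B: "finite B" "B \<subseteq> {..<n}" "\<And>w b. w \<in> W \<Longrightarrow> b \<in> B \<Longrightarrow> w $ b = 0"
    and e: "e ` B \<subseteq> carrier_vec n" "\<And>b. b \<in> B \<Longrightarrow> e b $ b = 1"
      "\<And>b b'. b \<in> B \<Longrightarrow> b' \<in> B - {b} \<Longrightarrow> e b $ b' = 0"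
  shows "lin_indpt (W \<union> e ` B) \<and> card (W \<union> e ` B) = card W + card B"
  using B e
proof (induction B rule: finite_induct)
  case empty
  then show ?case using W by simp
next
  case (insert b B)
  let ?S = "W \<union> e ` B"
  have IH: "lin_indpt ?S \<and> card ?S = card W + card B"
    by (rule insert.IH) (use insert.prems in blast)+
  have S: "?S \<subseteq> carrier_vec n" "finite ?S"
    using W insert.prems(3) insert.hyps(1) by auto
  have "w $ b = 0" if "w \<in> ?S" for w
    using that insert.hyps(2) insert.prems(2,5) by auto
  then have "lin_indpt (insert (e b) ?S)" "e b \<notin> ?S"
    using lin_indpt_insert_nonzero_coordinate[OF S(1) conjunct1[OF IH], of "e b" b] insert.prems
    by auto
  moreover have "W \<union> e ` insert b B = insert (e b) ?S" by auto
  ultimately show ?case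
    using IH S(2) insert.hyps by simp
qed

context
  fixes ty :: "'a::field itself" and n n' :: nat
begin

interpretation V: vec_space ty n .
interpretation V': vec_space ty n' .

lemma lin_indpt_image_of_lifting:
  assumes S: "S \<subseteq> carrier_vec n'" "finite S" "V'.lin_indpt S"
    and f: "f ` S \<subseteq> carrier_vec n" and \<rho>: "\<And>r. r < n' \<Longrightarrow> \<rho> r < n"
    and lift: "\<And>s r. s \<in> S \<Longrightarrow> r < n' \<Longrightarrow> f s $ \<rho> r = s $ r"
  shows "V.lin_indpt (f ` S)" "inj_on f S"
proof -
  show inj: "inj_on f S"
  proof (rule inj_onI)
    fix s t assume "s \<in> S" "t \<in> S" "f s = f t"
    moreover have "dim_vec s = n'" "dim_vec t = n'"
      using \<open>s \<in> S\<close> \<open>t \<in> S\<close> S(1) by auto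
    ultimately show "s = t"
      using lift[of s] lift[of t] by (intro eq_vecI) auto
  qed
  show "V.lin_indpt (f ` S)"
  proof
    assume "V.lin_dep (f ` S)"
    then obtain a v where a: "V.lincomb a (f ` S) = 0\<^sub>v n" "v \<in> f ` S" "a v \<noteq> 0"
      using V.finite_lin_dep[OF finite_imageI[OF S(2)] _ f] by auto
    have "V'.lincomb (a \<circ> f) S = 0\<^sub>v n'"
    proof (rule eq_vecI)
      fix r assume "r < dim_vec (0\<^sub>v n')"
      then have r: "r < n'" by simp
      have "V'.lincomb (a \<circ> f) S $ r = (\<Sum>s\<in>S. a (f s) * f s $ \<rho> r)"
        using V'.lincomb_index[OF r S(1)] lift r by simp
      also have "\<dots> = (\<Sum>x\<in>f ` S. a x * x $ \<rho> r)"
        by (simp add: sum.reindex[OF inj])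
      also have "\<dots> = V.lincomb a (f ` S) $ \<rho> r"
        using V.lincomb_index[OF \<rho>[OF r] f] by simp
      finally show "V'.lincomb (a \<circ> f) S $ r = 0\<^sub>v n' $ r"
        using a(1) \<rho>[OF r] r by simp
    qed (use V'.lincomb_dim[OF S(2,1)] in simp)
    then have "V'.lin_dep S"
      using V'.lin_dep_crit[OF S(2) subset_refl, where a = "a \<circ> f"] a(2,3) by auto
    with S(3) show False by blast
  qed
qed

end

lemma card_add_rank_le_rank_if_lifting:
  fixes A A' :: "'a::field mat"
  assumes A: "A \<in> carrier_mat n nc" and A': "A' \<in> carrier_mat n' nc'"
    and B: "B \<subseteq> {..<n}" and \<rho>: "\<And>r. r < n' \<Longrightarrow> \<rho> r < n"
    and lift: "\<And>s. s \<in> set (cols A') \<Longrightarrow>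
      \<exists>x\<in>set (cols A). (\<forall>b\<in>B. x $ b = 0) \<and> (\<forall>r<n'. x $ \<rho> r = s $ r)"
    and pivot: "\<And>b. b \<in> B \<Longrightarrow> \<exists>x\<in>set (cols A). x $ b = 1 \<and> (\<forall>b'\<in>B - {b}. x $ b' = 0)"
  shows "card B + vec_space.rank n' A' \<le> vec_space.rank n A"
proof -
  interpret V: vec_space "TYPE('a)" n .
  interpret V': vec_space "TYPE('a)" n' .
  obtain S where S: "S \<subseteq> set (cols A')" "V'.lin_indpt S" "card S = V'.rank A'"
    using V'.lin_indpt_subset_cols_card_rank[OF A'] .
  obtain f where f: "\<forall>s\<in>S.
      f s \<in> set (cols A) \<and> (\<forall>b\<in>B. f s $ b = 0) \<and> (\<forall>r<n'. f s $ \<rho> r = s $ r)"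
    using bchoice[of S] lift S(1) by (metis subsetD)
  obtain e where e: "\<forall>b\<in>B. e b \<in> set (cols A) \<and> e b $ b = 1 \<and> (\<forall>b'\<in>B - {b}. e b $ b' = 0)"
    using bchoice[of B] pivot by metis
  have cols: "set (cols A) \<subseteq> carrier_vec n" "S \<subseteq> carrier_vec n'"
    using cols_dim[of A] cols_dim[of A'] carrier_matD(1)[OF A] carrier_matD(1)[OF A'] S(1) by auto
  have fin: "finite S" "finite B"
    using S(1) B finite_subset by auto
  have fS: "f ` S \<subseteq> carrier_vec n" "\<And>w b. w \<in> f ` S \<Longrightarrow> b \<in> B \<Longrightarrow> w $ b = 0"
    and eB: "e ` B \<subseteq> carrier_vec n"
    using f e cols(1) by auto
  have "V.lin_indpt (f ` S)" "inj_on f S"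
    using lin_indpt_image_of_lifting[OF cols(2) fin(1) S(2) fS(1) \<rho>] f by auto
  then have T: "V.lin_indpt (f ` S \<union> e ` B)" "card (f ` S \<union> e ` B) = card S + card B"
    using V.lin_indpt_Un_pivot_vectors[OF fS(1) finite_imageI[OF fin(1)] _ fin(2) B fS(2) eB] e
    by (simp_all add: card_image)
  have "f ` S \<union> e ` B \<subseteq> set (cols A)"
    using f e by auto
  from V.rank_ge_card_indpt[OF A this T(1)] show ?thesis
    using T(2) S(3) by simp
qed

definition Hmat_col :: "'a::field mat \<Rightarrow> nat set \<Rightarrow> nat \<Rightarrow> nat \<times> nat \<Rightarrow> 'a vec" where
  "Hmat_col G U l = (\<lambda>(i, u). vec (card U + l * dim_row G) (\<lambda>r.
     if r < card U then (if sorted_list_of_set U ! r = u then 1 else 0)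
     else if (r - card U) div dim_row G = i then G $$ ((r - card U) mod dim_row G, u) else 0))"

lemma dim_row_Hmat [simp]: "dim_row (Hmat G U As) = card U + length As * dim_row G"
  by (simp add: Hmat_def Let_def)

lemma dim_col_Hmat [simp]: "dim_col (Hmat G U As) = length (H_cols U As)"
  by (simp add: Hmat_def Let_def)

lemma set_H_cols: "finite U \<Longrightarrow> set (H_cols U As) = {(i, u). i < length As \<and> u \<in> U - As ! i}"
  unfolding H_cols_def by auto

lemma cols_Hmat: "cols (Hmat G U As) = map (Hmat_col G U (length As)) (H_cols U As)"
proof (rule nth_equalityI)
  fix j assume "j < length (cols (Hmat G U As))"
  then show "cols (Hmat G U As) ! j = map (Hmat_col G U (length As)) (H_cols U As) ! j"
    by (cases "H_cols U As ! j") (auto simp: Hmat_def Hmat_col_def Let_def intro!: eq_vecI)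
qed simp

lemma Hmat_col_in_cols:
  "finite U \<Longrightarrow> i < length As \<Longrightarrow> u \<in> U - As ! i \<Longrightarrow>
    Hmat_col G U (length As) (i, u) \<in> set (cols (Hmat G U As))"
  by (simp add: cols_Hmat set_H_cols)

lemma Hmat_col_identity_row:
  "r < n \<Longrightarrow> Hmat_col G {0..<n} l (i, u) $ r = (if r = u then 1 else 0)"
  by (simp add: Hmat_col_def)

lemma sorted_list_of_set_nth_mem:
  "finite U \<Longrightarrow> r < card U \<Longrightarrow> sorted_list_of_set U ! r \<in> U"
  using nth_mem[of r "sorted_list_of_set U"] by simp

(* Row r of H_{..}[G|_U] reappears in H_{..}[G] as row row_embedding U n r: an identity row keeps
   its label (the r-th element of U), a G-row moves down by n - |U|. *)
definition row_embedding :: "nat set \<Rightarrow> nat \<Rightarrow> nat \<Rightarrow> nat" where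
  "row_embedding U n r = (if r < card U then sorted_list_of_set U ! r else r - card U + n)"

lemma row_embedding_less:
  assumes "U \<subseteq> {0..<n}" "r < card U + m"
  shows "row_embedding U n r < n + m"
proof (cases "r < card U")
  case True
  then have "sorted_list_of_set U ! r \<in> U"
    by (rule sorted_list_of_set_nth_mem[OF finite_subset[OF assms(1) finite_atLeastLessThan]])
  with assms(1) have "sorted_list_of_set U ! r < n" by auto
  with True show ?thesis by (simp add: row_embedding_def)
qed (use assms(2) in \<open>simp add: row_embedding_def\<close>)

lemma Hmat_col_row_embedding:
  assumes U: "U \<subseteq> {0..<n}" and r: "r < card U + l * dim_row G"
  shows "Hmat_col G {0..<n} l (i, u) $ row_embedding U n r = Hmat_col G U l (i, u) $ r"
proof (cases "r < card U")
  case True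
  then have "sorted_list_of_set U ! r \<in> U"
    by (rule sorted_list_of_set_nth_mem[OF finite_subset[OF U finite_atLeastLessThan]])
  with U have "sorted_list_of_set U ! r < n" by auto
  with True r show ?thesis by (simp add: Hmat_col_def row_embedding_def)
next
  case False
  with r show ?thesis by (simp add: Hmat_col_def row_embedding_def)
qed

lemma Hmat_cols_lift:
  assumes "B \<subseteq> {0..<n}" and s: "s \<in> set (cols (Hmat G ({0..<n} - B) (map (\<lambda>A. A - B) As)))"
  shows "\<exists>x\<in>set (cols (Hmat G {0..<n} As)). (\<forall>b\<in>B. x $ b = 0) \<and>
    (\<forall>r < card ({0..<n} - B) + length As * dim_row G. x $ row_embedding ({0..<n} - B) n r = s $ r)"
proof -
  obtain i u where iu: "i < length As" "u \<in> {0..<n} - As ! i" "u \<notin> B"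
    and s_def: "s = Hmat_col G ({0..<n} - B) (length As) (i, u)"
    using s by (auto simp: cols_Hmat set_H_cols)
  show ?thesis
  proof (intro bexI conjI)
    show "Hmat_col G {0..<n} (length As) (i, u) \<in> set (cols (Hmat G {0..<n} As))"
      using iu by (intro Hmat_col_in_cols) auto
    show "\<forall>b\<in>B. Hmat_col G {0..<n} (length As) (i, u) $ b = 0"
      using assms(1) iu(3) by (auto simp: Hmat_col_identity_row)
    show "\<forall>r < card ({0..<n} - B) + length As * dim_row G.
        Hmat_col G {0..<n} (length As) (i, u) $ row_embedding ({0..<n} - B) n r = s $ r"
      using Hmat_col_row_embedding[of "{0..<n} - B" n] s_def by auto
  qed
qed

lemma Hmat_cols_pivot:
  assumes "B \<subseteq> {0..<n}" "i < length As" "b \<in> B - As ! i"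
  shows "\<exists>x\<in>set (cols (Hmat G {0..<n} As)). x $ b = 1 \<and> (\<forall>b'\<in>B - {b}. x $ b' = 0)"
proof (rule bexI)
  show "Hmat_col G {0..<n} (length As) (i, b) \<in> set (cols (Hmat G {0..<n} As))"
    using assms by (intro Hmat_col_in_cols) auto
  have "b' < n" if "b' \<in> B" for b'
    using assms(1) that by auto
  then show "Hmat_col G {0..<n} (length As) (i, b) $ b = 1 \<and>
      (\<forall>b'\<in>B - {b}. Hmat_col G {0..<n} (length As) (i, b) $ b' = 0)"
    using assms(3) by (simp add: Hmat_col_identity_row)
qed

theorem proposition3p13:
  fixes G :: "'a::{field,finite} mat" and n k :: nat and As :: "nat set list" and B :: "nat set"
  assumes G: "G \<in> carrier_mat k n"
    and gen: "mrank G = k"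
    and As: "\<forall>i < length As. As ! i \<subseteq> {0..<n}"
    and B: "B \<subseteq> (\<Union>i < length As. {0..<n} - As ! i)"
  shows "mrank (Hmat G {0..<n} As)
           \<ge> card B + mrank (Hmat G ({0..<n} - B) (map (\<lambda>A. A - B) As))"
proof -
  let ?U = "{0..<n} - B" and ?As = "map (\<lambda>A. A - B) As" and ?l = "length As"
  have B_sub: "B \<subseteq> {0..<n}" using B by auto
  have k: "dim_row G = k" using G by simp
  have H: "Hmat G {0..<n} As \<in> carrier_mat (n + ?l * k) (dim_col (Hmat G {0..<n} As))"
    and H': "Hmat G ?U ?As \<in> carrier_mat (card ?U + ?l * k) (dim_col (Hmat G ?U ?As))"
    by (rule carrier_matI; simp add: k)+
  have "card B + vec_space.rank (card ?U + ?l * k) (Hmat G ?U ?As)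
      \<le> vec_space.rank (n + ?l * k) (Hmat G {0..<n} As)"
  proof (rule card_add_rank_le_rank_if_lifting[where \<rho> = "row_embedding ?U n", OF H H'])
    show "B \<subseteq> {..<n + ?l * k}" using B_sub by auto
    show "row_embedding ?U n r < n + ?l * k" if "r < card ?U + ?l * k" for r
      using row_embedding_less[OF _ that] by blast
    show "\<exists>x\<in>set (cols (Hmat G {0..<n} As)). (\<forall>b\<in>B. x $ b = 0) \<and>
        (\<forall>r<card ?U + ?l * k. x $ row_embedding ?U n r = s $ r)"
      if "s \<in> set (cols (Hmat G ?U ?As))" for s
      using Hmat_cols_lift[OF B_sub that] k by simp
    show "\<exists>x\<in>set (cols (Hmat G {0..<n} As)). x $ b = 1 \<and> (\<forall>b'\<in>B - {b}. x $ b' = 0)"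
      if "b \<in> B" for b
      using B that Hmat_cols_pivot[OF B_sub, of _ As b G] by blast
  qed
  then show ?thesis by (simp add: k)
qed

end
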